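(* Let $\gamma\in\mathbb{R}\setminus\{0,1,2,-2\}$ and $\epsilon\in\mathbb{R}$, and put $\kappa=\frac{\gamma+2}{\gamma-2}$. Let $\mathfrak g$ be the complex Lie algebra with basis $X_1,X_2,X_3,X_4,Y,Z$ and brackets \[ [X_2,X_1]=X_2+\epsilon Z,\quad [X_2,X_4]=[X_2,X_3]=[X_1,X_4]=0,\quad [X_1,X_3]=-X_3,\quad [X_3,X_4]=X_3, \] \[ [X_1,Z]=-\epsilon\,\tfrac{\gamma-2}{\gamma+2}\,Y,\quad [X_1,Y]=Y,\quad [X_2,Y]=Z,\quad [X_2,Z]=\tfrac{\gamma-2}{\gamma+2}X_2,\quad [Z,Y]=\tfrac{\gamma-2}{\gamma+2}Y, \] \[ [X_3,Y]=[X_3,Z]=[X_4,Y]=[X_4,Z]=0 . \] In the universal enveloping algebra $U(\mathfrak g)$ define $T=\sqrt{2\kappa}\,(Y+X_2)$, $S=\sqrt{2\kappa}\,(Y-X_2)$, $Z'=2\kappa Z$ and \[ C=T^2-S^2-Z'^2 . \] Then $C=4\kappa\left[2X_2Y-Z\left(\kappa Z+1\right)\right]$, and $C$ commutes (in $U(\mathfrak g)$) with each of $Y,Z,X_1,X_2,X_3,X_4$.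
   Context: The elements $T,S,Z'$ span a subalgebra isomorphic to $sl(2)$ with $[Z',T]=2S$, $[T,S]=2Z'$, $[S,Z']=-2T$, and $C$ is its Casimir element. The exclusion $\gamma\neq\pm2$ is needed only for the coefficients to be defined. In the paper this algebra arises from approximate symmetry generators of the equation $u_{tt}+\epsilon u_t=[(1+u/\gamma)^{\gamma-1}]_{xx}$, realized e.g. by $X_2=\partial_t$, $X_3=\partial_x$, $X_4=x\partial_x+\frac{2\gamma}{\gamma-2}(1+\frac u\gamma)\partial_u$, $Z=\frac{\gamma-2}{\gamma+2}t\partial_t-\frac{2\gamma}{\gamma+2}(1+\frac u\gamma)\partial_u$, $Y=\frac{\gamma-2}{\gamma+2}\frac{t^2}{2}\partial_t-\frac{2\gamma t}{\gamma+2}(1+\frac u\gamma)\partial_u$, $X_1=t\partial_t+x\partial_x+\epsilon Y$. *)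

theory Defs
  imports "HOL-Analysis.Analysis"
begin

definition commutator :: "'a::ring \<Rightarrow> 'a \<Rightarrow> 'a" where
  "commutator a b = a * b - b * a"

text \<open>An associative unital complex algebra is a unital ring 'a together with a
  unital ring homomorphism from the complex numbers into the centre of 'a
  (the scalars); scalar multiplication c.a is emb c * a.\<close>
definition complex_algebra_emb :: "(complex \<Rightarrow> 'a::ring_1) \<Rightarrow> bool" where
  "complex_algebra_emb emb \<longleftrightarrow>
     emb 1 = 1 \<and>
     (\<forall>c d. emb (c + d) = emb c + emb d) \<and>
     (\<forall>c d. emb (c * d) = emb c * emb d) \<and>
     (\<forall>c a. emb c * a = a * emb c)"

end

theory Submission
  imports Defs
begin

(* With k = \<kappa> and m = 1/\<kappa>, the relations [X2,Y] = Z, [X2,Z] = m X2, [Z,Y] = m Y say that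
   X2, Y, Z span a copy of sl(2), and C = 4\<kappa> K where K = 2 X2 Y - Z (k Z + 1) is its Casimir
   element.  Since ad x is a derivation, [K,x] only depends on [X2,x], [Y,x], [Z,x]; this gives
   the commutation with X2, Y, Z, and with X3, X4, which commute with all three.  For X1 the same
   expansion leaves [K,X1] = \<epsilon> ([Z,Y] - m Y) = 0. *)

lemma numeral_mult_left_commute: "a * (numeral n * b) = numeral n * (a * (b::'a::ring_1))"
  by (metis mult.assoc mult_of_nat_commute of_nat_numeral)

lemma commutator_mult_left: "commutator (a * b) c = a * commutator b c + commutator a c * (b::'a::ring)"
  by (simp add: commutator_def algebra_simps)

lemma commutator_add_left: "commutator (a + b) c = commutator a c + commutator b (c::'a::ring)"
  by (simp add: commutator_def algebra_simps)

lemma commutator_diff_left: "commutator (a - b) c = commutator a c - commutator b (c::'a::ring)"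
  by (simp add: commutator_def algebra_simps)

lemma commutator_central_left:
  assumes "\<And>x. c * x = x * c" shows "commutator c (a::'a::ring) = 0"
  by (simp add: commutator_def assms)

lemma commutator_numeral_left: "commutator (numeral n) (a::'a::ring_1) = 0"
  by (metis commutator_def diff_self mult_of_nat_commute of_nat_numeral)

lemma commutator_one_left: "commutator 1 (a::'a::ring_1) = 0"
  by (simp add: commutator_def)

lemma commutator_central_mult_left:
  assumes "\<And>x. c * x = x * c" shows "commutator (c * a) b = c * commutator a (b::'a::ring)"
  by (metis assms commutator_def mult.assoc right_diff_distrib)

lemma commutator_self: "commutator a (a::'a::ring) = 0"
  by (simp add: commutator_def)

lemma commutator_zero_swap: "commutator a b = 0 \<Longrightarrow> commutator b (a::'a::ring) = 0"
  by (simp add: commutator_def)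

lemma commutator_swap: "commutator a b = - commutator b (a::'a::ring)"
  by (simp add: commutator_def)

locale sl2_triple =
  fixes X Y Z k m :: "'a::ring_1"
  assumes k_central: "k * x = x * k" and m_central: "m * x = x * m"
    and k_m: "k * m = 1"
    and X_Y: "commutator X Y = Z"
    and X_Z: "commutator X Z = m * X"
    and Z_Y: "commutator Z Y = m * Y"
begin

lemma k_m_cancel: "k * (m * a) = a"
  by (simp add: k_m flip: mult.assoc)

lemma m_k_cancel: "m * (k * a) = a"
  by (metis k_m_cancel k_central m_central mult.assoc)

lemma k_left_commute: "a * (k * b) = k * (a * b)"
  by (metis k_central mult.assoc)

lemma m_left_commute: "a * (m * b) = m * (a * b)"
  by (metis m_central mult.assoc)

lemma Y_Z: "commutator Y Z = - (m * Y)"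
  using Z_Y commutator_swap by metis

lemma Y_X: "commutator Y X = - Z"
  using X_Y commutator_swap by metis

lemma Z_X: "commutator Z X = - (m * X)"
  using X_Z commutator_swap by metis

definition casimir :: 'a where
  "casimir = 2 * X * Y - Z * (k * Z + 1)"

lemma commutator_casimir:
  "commutator casimir a =
     2 * (X * commutator Y a + commutator X a * Y)
     - k * (Z * commutator Z a + commutator Z a * Z) - commutator Z a"
  unfolding casimir_def
  by (simp add: commutator_diff_left commutator_mult_left commutator_add_left commutator_one_left
      commutator_numeral_left commutator_central_left k_central algebra_simps)

lemma casimir_commutes_Y: "commutator casimir Y = 0"
proof -
  have "commutator casimir Y = 2 * (Z * Y) - k * (Z * (m * Y) + m * Y * Z) - m * Y"
    by (simp add: commutator_casimir X_Y Z_Y commutator_self)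
  also have "\<dots> = Z * Y - Y * Z - m * Y"
    by (simp add: distrib_left mult.assoc m_left_commute k_m_cancel m_k_cancel mult_2)
  also have "\<dots> = 0"
    using Z_Y by (simp add: commutator_def)
  finally show ?thesis .
qed

lemma casimir_commutes_Z: "commutator casimir Z = 0"
  by (simp add: commutator_casimir X_Z Y_Z commutator_self mult.assoc m_left_commute)

lemma casimir_commutes_X: "commutator casimir X = 0"
proof -
  have "commutator casimir X = - 2 * (X * Z) + k * (Z * (m * X) + m * X * Z) + m * X"
    by (simp add: commutator_casimir Y_X Z_X commutator_self algebra_simps)
  also have "\<dots> = Z * X - X * Z + m * X"
    by (simp add: distrib_left mult.assoc m_left_commute k_m_cancel m_k_cancel mult_2)
  also have "\<dots> = 0"
    using X_Z by (simp add: commutator_def algebra_simps)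
  finally show ?thesis .
qed

lemma casimir_commutes_if_commutes_X_Y_Z:
  assumes "commutator X a = 0" "commutator Y a = 0" "commutator Z a = 0"
  shows "commutator casimir a = 0"
  by (simp add: commutator_casimir assms)

lemma casimir_commutes_dilation:
  assumes e_central: "\<And>x. e * x = x * e"
    and X_W: "commutator X W = X + e * Z"
    and W_Z: "commutator W Z = - (e * m * Y)"
    and W_Y: "commutator W Y = Y"
  shows "commutator casimir W = 0"
proof -
  have e_left_commute: "a * (e * b) = e * (a * b)" for a b
    by (metis e_central mult.assoc)
  have Y_W: "commutator Y W = - Y" and Z_W: "commutator Z W = e * m * Y"
    using W_Y W_Z commutator_swap by (metis, metis minus_minus)
  have "X * - Y + (X + e * Z) * Y = e * (Z * Y)"
    by (simp add: algebra_simps)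
  then have "commutator casimir W
      = 2 * (e * (Z * Y)) - k * (Z * (e * m * Y) + e * m * Y * Z) - e * m * Y"
    unfolding commutator_casimir X_W Y_W Z_W by simp
  also have "\<dots> = 2 * (e * (Z * Y)) - e * (Z * Y + Y * Z) - e * (m * Y)"
    by (simp only: mult.assoc distrib_left e_left_commute[of Z] e_left_commute[of k]
        m_left_commute[of Z] k_m_cancel)
  also have "\<dots> = e * (Z * Y - Y * Z - m * Y)"
    by (simp add: algebra_simps mult_2)
  also have "\<dots> = 0"
    using Z_Y by (simp add: commutator_def)
  finally show ?thesis .
qed

lemma casimir_eq_sl2_form:
  assumes s_central: "\<And>x. s * x = x * s" and s_square: "s * s = 2 * k"
  shows "s * (Y + X) * (s * (Y + X)) - s * (Y - X) * (s * (Y - X)) - 2 * k * Z * (2 * k * Z)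
    = 4 * k * casimir"
proof -
  have scaled_square: "s * a * (s * a) = 2 * k * (a * a)" for a
    by (metis s_central s_square mult.assoc)
  have Y_X_swap: "Y * X = X * Y - Z"
    using X_Y by (simp add: commutator_def algebra_simps)
  have four: "4 * a = 2 * a + 2 * a" for a :: 'a
    by (metis distrib_right numeral_Bit0)
  show ?thesis
    unfolding scaled_square casimir_def
    by (simp add: algebra_simps Y_X_swap numeral_mult_left_commute k_left_commute[of Z] four mult_2)
qed

end

lemma complex_algebra_emb_of_nat:
  assumes "complex_algebra_emb emb"
  shows "emb (of_nat n) = of_nat n"
proof (induction n)
  case 0
  have "emb 0 = emb 0 + emb 0"
    using assms by (metis add_0 complex_algebra_emb_def)
  then show ?case by simp
next
  case (Suc n)
  then show ?case
    using assms by (simp add: complex_algebra_emb_def add.commute)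
qed

lemma complex_algebra_emb_numeral_mult:
  assumes "complex_algebra_emb emb"
  shows "emb (numeral n * c) = numeral n * emb c"
  using assms complex_algebra_emb_of_nat[OF assms, of "numeral n"]
  by (simp add: complex_algebra_emb_def)

theorem proposition1:
  fixes \<gamma> \<epsilon> :: real
    and emb :: "complex \<Rightarrow> 'a::ring_1"
    and X1 X2 X3 X4 Y Z :: 'a
  assumes "\<gamma> \<noteq> 0" "\<gamma> \<noteq> 1" "\<gamma> \<noteq> 2" "\<gamma> \<noteq> -2"
    and alg: "complex_algebra_emb emb"
    and "commutator X2 X1 = X2 + emb (complex_of_real \<epsilon>) * Z"
    and "commutator X2 X4 = 0" and "commutator X2 X3 = 0" and "commutator X1 X4 = 0"
    and "commutator X1 X3 = - X3"
    and "commutator X3 X4 = X3"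
    and "commutator X1 Z = - (emb (complex_of_real (\<epsilon> * ((\<gamma> - 2) / (\<gamma> + 2)))) * Y)"
    and "commutator X1 Y = Y"
    and "commutator X2 Y = Z"
    and "commutator X2 Z = emb (complex_of_real ((\<gamma> - 2) / (\<gamma> + 2))) * X2"
    and "commutator Z Y = emb (complex_of_real ((\<gamma> - 2) / (\<gamma> + 2))) * Y"
    and "commutator X3 Y = 0" and "commutator X3 Z = 0"
    and "commutator X4 Y = 0" and "commutator X4 Z = 0"
  shows
    "let \<kappa> = complex_of_real ((\<gamma> + 2) / (\<gamma> - 2));
         T = emb (csqrt (2 * \<kappa>)) * (Y + X2);
         S = emb (csqrt (2 * \<kappa>)) * (Y - X2);
         Z' = emb (2 * \<kappa>) * Z;
         C = T * T - S * S - Z' * Z'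
     in C = emb (4 * \<kappa>) * (2 * X2 * Y - Z * (emb \<kappa> * Z + 1))
        \<and> commutator C Y = 0 \<and> commutator C Z = 0
        \<and> commutator C X1 = 0 \<and> commutator C X2 = 0
        \<and> commutator C X3 = 0 \<and> commutator C X4 = 0"
proof -
  have emb_1: "emb 1 = 1" and emb_mult: "\<And>c d. emb (c * d) = emb c * emb d"
    and emb_central: "\<And>c a. emb c * a = a * emb c"
    using alg unfolding complex_algebra_emb_def by blast+
  define \<kappa> where "\<kappa> = complex_of_real ((\<gamma> + 2) / (\<gamma> - 2))"
  define \<mu> where "\<mu> = complex_of_real ((\<gamma> - 2) / (\<gamma> + 2))"
  have "((\<gamma> + 2) / (\<gamma> - 2)) * ((\<gamma> - 2) / (\<gamma> + 2)) = 1"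
    using assms(3,4) by simp
  then have "emb \<kappa> * emb \<mu> = 1"
    by (metis \<kappa>_def \<mu>_def emb_1 emb_mult of_real_1 of_real_mult)
  then have "sl2_triple X2 Y Z (emb \<kappa>) (emb \<mu>)"
    using emb_central assms(14-16) unfolding sl2_triple_def \<mu>_def by blast
  then interpret sl2: sl2_triple X2 Y Z "emb \<kappa>" "emb \<mu>" .
  have "commutator X1 Z = - (emb (complex_of_real \<epsilon>) * emb \<mu> * Y)"
    using assms(12) by (simp only: \<mu>_def of_real_mult emb_mult)
  then have X1: "commutator sl2.casimir X1 = 0"
    using assms(6,13) by (intro sl2.casimir_commutes_dilation[OF emb_central]) simp_all
  have X3: "commutator sl2.casimir X3 = 0" and X4: "commutator sl2.casimir X4 = 0"
    using assms(7,8) commutator_zero_swap[OF assms(17)] commutator_zero_swap[OF assms(18)]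
      commutator_zero_swap[OF assms(19)] commutator_zero_swap[OF assms(20)]
    by (simp_all add: sl2.casimir_commutes_if_commutes_X_Y_Z)
  define T where "T = emb (csqrt (2 * \<kappa>)) * (Y + X2)"
  define S where "S = emb (csqrt (2 * \<kappa>)) * (Y - X2)"
  define Z' where "Z' = emb (2 * \<kappa>) * Z"
  define C where "C = T * T - S * S - Z' * Z'"
  have "emb (csqrt (2 * \<kappa>)) * emb (csqrt (2 * \<kappa>)) = emb (2 * \<kappa>)"
    unfolding emb_mult[symmetric] power2_csqrt[unfolded power2_eq_square] ..
  then have C_casimir: "C = emb (4 * \<kappa>) * sl2.casimir"
    unfolding C_def T_def S_def Z'_def complex_algebra_emb_numeral_mult[OF alg]
    by (intro sl2.casimir_eq_sl2_form emb_central)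
  have "commutator C x = 0" if "commutator sl2.casimir x = 0" for x
    using that by (simp add: C_casimir commutator_central_mult_left[OF emb_central])
  with X1 X3 X4 sl2.casimir_commutes_X sl2.casimir_commutes_Y sl2.casimir_commutes_Z
  have "commutator C Y = 0 \<and> commutator C Z = 0 \<and> commutator C X1 = 0 \<and> commutator C X2 = 0
      \<and> commutator C X3 = 0 \<and> commutator C X4 = 0"
    by blast
  with C_casimir show ?thesis
    unfolding Let_def \<kappa>_def[symmetric] T_def[symmetric] S_def[symmetric] Z'_def[symmetric]
      C_def[symmetric] sl2.casimir_def
    by blast
qed
end
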